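(* Let $N\ge 3$ and define, for a function $V$ of $s>0$, $$\mathcal{L}V:=(5-N)V_s s^2+\tfrac12 V_s-V_sVs^2-2(N-2)Vs+(N-2)V^2s.$$ For every $m>0$ there exists $L_m>0$ such that the problem $\mathcal{L}\tilde V=0$ for $s>0$, $\tilde V(0)=m$, admits a unique classical solution $\tilde V\in C^2([0,L_m])$, and this solution satisfies $\tilde V_s(0)=0$ and $(2-m)\tilde V_{ss}(s)\ge (N-2)m(2-m)^2$ for $s\in[0,L_m]$. *)

theory Defs
  imports "HOL-Analysis.Analysis"
begin

definition C2_on :: "real \<Rightarrow> (real \<Rightarrow> real) \<Rightarrow> (real \<Rightarrow> real) \<Rightarrow> (real \<Rightarrow> real) \<Rightarrow> bool" where
  "C2_on L V V1 V2 \<longleftrightarrow>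
     (\<forall>s\<in>{0..L}. (V has_real_derivative V1 s) (at s within {0..L})
                 \<and> (V1 has_real_derivative V2 s) (at s within {0..L}))
     \<and> continuous_on {0..L} V2"

definition opL :: "nat \<Rightarrow> (real \<Rightarrow> real) \<Rightarrow> (real \<Rightarrow> real) \<Rightarrow> real \<Rightarrow> real" where
  "opL N V V1 s = (5 - real N) * V1 s * s^2 + 1/2 * V1 s - V1 s * V s * s^2
                  - 2 * (real N - 2) * V s * s + (real N - 2) * (V s)^2 * s"

definition is_sol :: "nat \<Rightarrow> real \<Rightarrow> real \<Rightarrow> (real \<Rightarrow> real) \<Rightarrow> (real \<Rightarrow> real) \<Rightarrow> (real \<Rightarrow> real) \<Rightarrow> bool" where
  "is_sol N m L V V1 V2 \<longleftrightarrow> C2_on L V V1 V2 \<and> V 0 = m \<and> (\<forall>s\<in>{0<..L}. opL N V V1 s = 0)"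

end

theory Submission
  imports Defs
begin

(* Write a = N - 2 and D(s,V) = 1/2 + (3 - a) s^2 - V s^2. Then LV = V_s D(s,V) - a s V (2 - V),
   and D(0,V) = 1/2, so near s = 0 the problem is the regular ODE V_s = a s V (2 - V) / D(s,V).

   Existence: in the variable y = s^2 the equation reads dV/dy = a V (2 - V) / (1 + (6 - 2a - 2V) y).
   If m (2 - m) ~= 0, its inverse function y(V) solves the linear equation
   dy/dV = (1 + (6 - 2a - 2V) y) / (a V (2 - V)) (hodograph transform), which is solved with an
   integrating factor and then inverted near V = m by the inverse function theorem; if m = 2 the
   solution is constant. Since V_s(0) = 0 and V_ss(0) = 2 a m (2 - m), the bound on (2 - m) V_ss
   holds at s = 0 with a factor 2 to spare, hence on a short interval.

   Uniqueness: where D > 0 the right-hand side is locally Lipschitz in V, so two solutions that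
   agree at a point agree slightly to the right of it, and an infimum argument spreads the
   agreement over [0, L]. *)

section \<open>One-dimensional ODE tools\<close>

lemma isCont_eventually_greater:
  fixes f :: "'a::t2_space \<Rightarrow> 'b::linorder_topology"
  assumes "isCont f x" "c < f x"
  shows "\<forall>\<^sub>F y in nhds x. c < f y"
  using assms by (simp add: isCont_def tendsto_at_iff_tendsto_nhds order_tendstoD(1))

lemma eventually_nhds_0_imp_Icc:
  fixes P :: "real \<Rightarrow> bool"
  assumes "eventually P (nhds 0)"
  obtains L where "L > 0" "\<And>s. s \<in> {0..L} \<Longrightarrow> P s"
proof -
  obtain d where "d > 0" "\<And>s. dist s 0 < d \<Longrightarrow> P s"
    using assms unfolding eventually_nhds_metric by blast
  then show thesis by (intro that[of "d / 2"]) (auto simp: dist_real_def)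
qed

lemma real_local_inverse_function:
  fixes u u' :: "real \<Rightarrow> real"
  assumes U: "open U" "x0 \<in> U"
    and der: "\<And>x. x \<in> U \<Longrightarrow> (u has_real_derivative u' x) (at x)"
    and cont: "continuous_on U u'" and nz: "u' x0 \<noteq> 0"
  obtains \<rho> g where "\<rho> > 0" "g (u x0) = x0"
    "\<And>y. \<bar>y - u x0\<bar> < \<rho> \<Longrightarrow>
       g y \<in> U \<and> u (g y) = y \<and> u' (g y) \<noteq> 0 \<and> (g has_real_derivative inverse (u' (g y))) (at y)"
proof -
  have derf: "\<And>x. x \<in> U \<Longrightarrow> (u has_derivative blinfun_apply (Blinfun ((*) (u' x)))) (at x)"
    using der
    by (simp add: bounded_linear_Blinfun_apply bounded_linear_mult_right has_field_derivative_imp_has_derivative)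
  have contf: "continuous_on U (\<lambda>x. Blinfun ((*) (u' x)))"
    unfolding blinfun_mult_right.abs_eq [symmetric] by (intro continuous_intros cont)
  have invf: "Blinfun ((*) (inverse (u' x0))) o\<^sub>L Blinfun ((*) (u' x0)) = id_blinfun"
    using nz by (intro blinfun_eqI) (simp add: bounded_linear_mult_right bounded_linear_Blinfun_apply)
  obtain U' W g g' where "open U'" "U' \<subseteq> U" "x0 \<in> U'" "open W" "u x0 \<in> W" and hom: "homeomorphism U' W u g"
    and derg: "\<And>y. y \<in> W \<Longrightarrow> (g has_derivative g' y) (at y)"
    and g': "\<And>y. y \<in> W \<Longrightarrow> g' y = inv (blinfun_apply (Blinfun ((*) (u' (g y)))))"
    and bij: "\<And>y. y \<in> W \<Longrightarrow> bij (blinfun_apply (Blinfun ((*) (u' (g y)))))"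
    by (rule inverse_function_theorem [OF U(1) derf contf U(2) invf]) blast+
  obtain \<rho> where "\<rho> > 0" and ball: "ball (u x0) \<rho> \<subseteq> W"
    using \<open>open W\<close> \<open>u x0 \<in> W\<close> openE by blast
  show thesis
  proof (rule that[OF \<open>\<rho> > 0\<close>])
    show "g (u x0) = x0" using hom \<open>x0 \<in> U'\<close> by (simp add: homeomorphism_apply1)
    fix y assume "\<bar>y - u x0\<bar> < \<rho>"
    then have y: "y \<in> W" using ball by (auto simp: dist_real_def)
    have mult: "blinfun_apply (Blinfun ((*) (u' (g y)))) = (*) (u' (g y))"
      by (simp add: bounded_linear_Blinfun_apply bounded_linear_mult_right)
    have nz: "u' (g y) \<noteq> 0"
      using bij[OF y] by (auto simp: mult bij_def inj_on_def)
    have "inv ((*) (u' (g y))) = (*) (inverse (u' (g y)))"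
      using nz by (intro inv_equality) simp_all
    then have "(g has_real_derivative inverse (u' (g y))) (at y)"
      using derg[OF y] g'[OF y] mult by (simp add: has_field_derivative_def mult.commute)
    moreover have "g y \<in> U"
      using hom y \<open>U' \<subseteq> U\<close> homeomorphism_image2 by blast
    ultimately show "g y \<in> U \<and> u (g y) = y \<and> u' (g y) \<noteq> 0 \<and> (g has_real_derivative inverse (u' (g y))) (at y)"
      using hom y nz by (simp add: homeomorphism_apply2)
  qed
qed

lemma linear_ode_solvable:
  fixes p h :: "real \<Rightarrow> real"
  assumes p: "continuous_on {c..d} p" and h: "continuous_on {c..d} h"
  shows "\<exists>u. u x0 = 0 \<and> (\<forall>x\<in>{c..d}. (u has_real_derivative h x + p x * u x) (at x within {c..d}))"
proof -
  obtain P where P: "\<And>x. x \<in> {c..d} \<Longrightarrow> (P has_real_derivative p x) (at x within {c..d})"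
    using integral_has_real_derivative[OF p] by blast
  have "continuous_on {c..d} (\<lambda>x. exp (- P x) * h x)"
    by (intro continuous_intros h DERIV_continuous_on[OF P])
  then obtain Q where Q: "\<And>x. x \<in> {c..d} \<Longrightarrow> (Q has_real_derivative exp (- P x) * h x) (at x within {c..d})"
    using integral_has_real_derivative by blast
  define u where "u x = (Q x - Q x0) * exp (P x)" for x
  have u': "(u has_real_derivative h x + p x * u x) (at x within {c..d})" if "x \<in> {c..d}" for x
  proof -
    have "(u has_real_derivative (exp (- P x) * h x - 0) * exp (P x) + exp (P x) * p x * (Q x - Q x0))
        (at x within {c..d})"
      unfolding u_def by (rule derivative_eq_intros refl Q P that)+
    moreover have "exp (- P x) * exp (P x) = 1" by (simp add: exp_minus)
    ultimately show ?thesis by (simp add: u_def algebra_simps)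
  qed
  moreover have "u x0 = 0" by (simp add: u_def)
  ultimately show ?thesis by (intro exI[of _ u] conjI ballI u')
qed

lemma agree_on_interval_by_continuation:
  fixes V W :: "real \<Rightarrow> real"
  assumes cV: "continuous_on {a..b} V" and cW: "continuous_on {a..b} W" and Wa: "W a = V a"
    and step: "\<And>T. T \<in> {a..b} \<Longrightarrow> W T = V T \<Longrightarrow>
                 \<exists>\<eta>>0. \<forall>s\<in>{a..b}. T \<le> s \<and> s \<le> T + \<eta> \<longrightarrow> W s = V s"
  shows "\<forall>s\<in>{a..b}. W s = V s"
proof (rule ccontr)
  assume "\<not> (\<forall>s\<in>{a..b}. W s = V s)"
  define B where "B = {s\<in>{a..b}. W s \<noteq> V s}"
  have "B \<noteq> {}" using \<open>\<not> (\<forall>s\<in>{a..b}. W s = V s)\<close> by (auto simp: B_def)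
  have "bdd_below B" unfolding B_def by (rule bdd_belowI[of _ a]) auto
  define T where "T = Inf B"
  have T_le: "T \<le> s" if "s \<in> B" for s
    using cInf_lower[OF that \<open>bdd_below B\<close>] by (simp add: T_def)
  have T: "T \<in> {a..b}"
    using \<open>B \<noteq> {}\<close> T_le cInf_greatest[OF \<open>B \<noteq> {}\<close>, of a] by (force simp: T_def B_def)
  have below_T: "W s = V s" if "a \<le> s" "s < T" for s
    using T_le[of s] that T by (force simp: B_def)
  have WT: "W T = V T"
  proof (rule ccontr)
    assume "W T \<noteq> V T"
    then have "a < T" using T Wa by (cases "T = a") auto
    have "((\<lambda>s. W s - V s) \<longlongrightarrow> W T - V T) (at T within {a..b})"
      using cV cW T by (intro tendsto_intros) (auto simp: continuous_on_eq_continuous_within continuous_within)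
    from tendsto_imp_eventually_ne[OF this, of 0] \<open>W T \<noteq> V T\<close>
    obtain d where "d > 0" and d: "\<And>x. x \<in> {a..b} \<Longrightarrow> x \<noteq> T \<Longrightarrow> dist x T < d \<Longrightarrow> W x - V x \<noteq> 0"
      unfolding eventually_at by auto
    define x where "x = T - min (T - a) d / 2"
    have "x \<in> {a..b}" "x \<noteq> T" "dist x T < d" "a \<le> x" "x < T"
      using \<open>d > 0\<close> \<open>a < T\<close> T by (auto simp: x_def dist_real_def min_def field_simps)
    then show False using d below_T by auto
  qed
  obtain \<eta> where "\<eta> > 0" and \<eta>: "\<And>s. s \<in> {a..b} \<Longrightarrow> T \<le> s \<Longrightarrow> s \<le> T + \<eta> \<Longrightarrow> W s = V s"
    using step[OF T WT] by auto
  have "T + \<eta> \<le> Inf B"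
  proof (rule cInf_greatest[OF \<open>B \<noteq> {}\<close>])
    fix s assume "s \<in> B"
    then show "T + \<eta> \<le> s" using \<eta>[of s] T_le[of s] by (force simp: B_def)
  qed
  then show False using \<open>\<eta> > 0\<close> by (simp add: T_def)
qed

lemma lipschitz_ode_unique_on_short_interval:
  fixes V W V1 W1 :: "real \<Rightarrow> real"
  assumes "T \<le> R" "0 \<le> K" "K * (R - T) < 1"
    and dV: "\<And>x. x \<in> {T..R} \<Longrightarrow> (V has_real_derivative V1 x) (at x within {T..R})"
    and dW: "\<And>x. x \<in> {T..R} \<Longrightarrow> (W has_real_derivative W1 x) (at x within {T..R})"
    and WT: "W T = V T"
    and lip: "\<And>x. x \<in> {T<..<R} \<Longrightarrow> \<bar>W1 x - V1 x\<bar> \<le> K * \<bar>W x - V x\<bar>"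
  shows "\<forall>s\<in>{T..R}. W s = V s"
proof -
  have cont: "continuous_on {T..R} (\<lambda>x. \<bar>W x - V x\<bar>)"
    by (intro continuous_intros DERIV_continuous_on[OF dV] DERIV_continuous_on[OF dW])
  obtain s0 where "s0 \<in> {T..R}" and max: "\<And>y. y \<in> {T..R} \<Longrightarrow> \<bar>W y - V y\<bar> \<le> \<bar>W s0 - V s0\<bar>"
    using continuous_attains_sup[OF compact_Icc _ cont] \<open>T \<le> R\<close> by auto
  define E where "E = \<bar>W s0 - V s0\<bar>"
  have "E \<ge> 0" by (simp add: E_def)
  have bound: "\<bar>W s - V s\<bar> \<le> K * (R - T) * E" if s: "s \<in> {T..R}" for s
  proof (cases "s = T")
    case True
    then show ?thesis using WT \<open>0 \<le> K\<close> \<open>T \<le> R\<close> \<open>E \<ge> 0\<close> by simp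
  next
    case False
    then have "T < s" using s by simp
    have "\<exists>x\<in>{T<..<s}. (W s - V s) - (W T - V T) = (\<lambda>h. (W1 x - V1 x) * h) (s - T)"
    proof (rule mvt_simple[OF \<open>T < s\<close>])
      fix x assume "T \<le> x" "x \<le> s"
      then have "x \<in> {T..R}" using s by simp
      have sub: "{T..s} \<subseteq> {T..R}" using s by auto
      have "((\<lambda>x. W x - V x) has_real_derivative W1 x - V1 x) (at x within {T..s})"
        by (intro DERIV_diff has_field_derivative_subset[OF dW[OF \<open>x \<in> {T..R}\<close>] sub]
            has_field_derivative_subset[OF dV[OF \<open>x \<in> {T..R}\<close>] sub])
      then show "((\<lambda>x. W x - V x) has_derivative (\<lambda>h. (W1 x - V1 x) * h)) (at x within {T..s})"
        by (simp add: has_field_derivative_def)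
    qed
    then obtain x where x: "T < x" "x < s" and mv: "W s - V s = (W1 x - V1 x) * (s - T)"
      using WT by auto
    have "x \<in> {T<..<R}" "x \<in> {T..R}" using x s by auto
    have "\<bar>W s - V s\<bar> = \<bar>W1 x - V1 x\<bar> * (s - T)"
      using mv x by (simp add: abs_mult)
    also have "\<dots> \<le> K * E * (R - T)"
    proof (rule mult_mono)
      show "\<bar>W1 x - V1 x\<bar> \<le> K * E"
        using order_trans[OF lip[OF \<open>x \<in> {T<..<R}\<close>] mult_left_mono[OF max[OF \<open>x \<in> {T..R}\<close>] \<open>0 \<le> K\<close>]]
        by (simp add: E_def)
      show "s - T \<le> R - T" "0 \<le> K * E" "0 \<le> s - T"
        using s \<open>0 \<le> K\<close> \<open>E \<ge> 0\<close> by simp_all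
    qed
    finally show ?thesis by (simp add: algebra_simps)
  qed
  have "(1 - K * (R - T)) * E \<le> 0"
    using bound[OF \<open>s0 \<in> {T..R}\<close>] by (simp add: E_def algebra_simps)
  then have "E = 0"
    using \<open>K * (R - T) < 1\<close> \<open>E \<ge> 0\<close> by (simp add: mult_le_0_iff)
  then show ?thesis using max by (simp add: E_def)
qed

section \<open>The equation solved for \<open>V\<^sub>s\<close>\<close>

definition slope_denom :: "real \<Rightarrow> real \<Rightarrow> real \<Rightarrow> real" where
  "slope_denom a s v = 1/2 + (3 - a) * s^2 - v * s^2"

definition slope :: "real \<Rightarrow> real \<Rightarrow> real \<Rightarrow> real" where
  "slope a s v = a * s * v * (2 - v) / slope_denom a s v"

lemma opL_eq_slope_denom:
  "opL N V V1 s = V1 s * slope_denom (real N - 2) s (V s) - (real N - 2) * s * V s * (2 - V s)"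
  unfolding opL_def slope_denom_def by (simp add: algebra_simps power2_eq_square)

section \<open>Uniqueness\<close>

definition slope_diff_quot :: "real \<Rightarrow> real \<Rightarrow> real \<Rightarrow> real \<Rightarrow> real" where
  "slope_diff_quot a s x y =
     a * s * ((1/2 + (3 - a) * s^2) * (2 - x - y) + s^2 * x * y) / (slope_denom a s x * slope_denom a s y)"

lemma slope_diff:
  assumes Dx: "slope_denom a s x \<noteq> 0" and Dy: "slope_denom a s y \<noteq> 0"
  shows "slope a s x - slope a s y = slope_diff_quot a s x y * (x - y)"
proof -
  have "x * (2 - x) * slope_denom a s y - y * (2 - y) * slope_denom a s x
      = ((1/2 + (3 - a) * s^2) * (2 - x - y) + s^2 * x * y) * (x - y)"
    unfolding slope_denom_def by algebra
  moreover have "slope a s x - slope a s y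
      = a * s * (x * (2 - x) * slope_denom a s y - y * (2 - y) * slope_denom a s x)
        / (slope_denom a s x * slope_denom a s y)"
    unfolding slope_def using Dx Dy by (simp add: diff_frac_eq algebra_simps)
  ultimately show ?thesis by (simp add: slope_diff_quot_def)
qed

lemma slope_ode_solutions_agree_right:
  fixes V W V1 W1 :: "real \<Rightarrow> real"
  assumes dV: "\<And>s. s \<in> {0..L} \<Longrightarrow> (V has_real_derivative V1 s) (at s within {0..L})"
    and dW: "\<And>s. s \<in> {0..L} \<Longrightarrow> (W has_real_derivative W1 s) (at s within {0..L})"
    and eV: "\<And>s. s \<in> {0<..L} \<Longrightarrow> V1 s * slope_denom a s (V s) = a * s * V s * (2 - V s)"
    and eW: "\<And>s. s \<in> {0<..L} \<Longrightarrow> W1 s * slope_denom a s (W s) = a * s * W s * (2 - W s)"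
    and T: "T \<in> {0..L}" and WT: "W T = V T" and DT: "slope_denom a T (V T) > 0"
  shows "\<exists>\<eta>>0. \<forall>s\<in>{0..L}. T \<le> s \<and> s \<le> T + \<eta> \<longrightarrow> W s = V s"
proof -
  let ?F = "at T within {0..L}"
  define q where "q x = slope_diff_quot a x (W x) (V x)" for x
  define K where "K = \<bar>q T\<bar> + 1"
  have tV: "(V \<longlongrightarrow> V T) ?F" and tW: "(W \<longlongrightarrow> W T) ?F"
    using DERIV_continuous_on[OF dV] DERIV_continuous_on[OF dW] T
    by (auto simp: continuous_on_eq_continuous_within continuous_within)
  have tDV: "((\<lambda>x. slope_denom a x (V x)) \<longlongrightarrow> slope_denom a T (V T)) ?F"
    and tDW: "((\<lambda>x. slope_denom a x (W x)) \<longlongrightarrow> slope_denom a T (W T)) ?F"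
    unfolding slope_denom_def by (intro tendsto_intros tV tW)+
  have tq: "(q \<longlongrightarrow> q T) ?F"
    unfolding q_def slope_diff_quot_def using DT WT by (intro tendsto_intros tV tW tDV tDW) auto
  have "\<forall>\<^sub>F x in ?F. 0 < slope_denom a x (V x)"
    using order_tendstoD(1)[OF tDV DT] .
  moreover have "\<forall>\<^sub>F x in ?F. 0 < slope_denom a x (W x)"
    using order_tendstoD(1)[OF tDW] DT WT by simp
  moreover have "\<forall>\<^sub>F x in ?F. \<bar>q x\<bar> < K"
    using order_tendstoD(2)[OF tendsto_rabs[OF tq]] by (simp add: K_def)
  ultimately have "\<forall>\<^sub>F x in ?F. 0 < slope_denom a x (V x) \<and> 0 < slope_denom a x (W x) \<and> \<bar>q x\<bar> < K"
    by eventually_elim blast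
  then obtain d where "d > 0" and near: "\<And>x. x \<in> {0..L} \<Longrightarrow> x \<noteq> T \<Longrightarrow> dist x T < d \<Longrightarrow>
      0 < slope_denom a x (V x) \<and> 0 < slope_denom a x (W x) \<and> \<bar>q x\<bar> < K"
    unfolding eventually_at by blast
  define \<eta> where "\<eta> = min (d / 2) (1 / (2 * K))"
  define R where "R = min (T + \<eta>) L"
  have "K > 0" "\<eta> > 0" "\<eta> < d" using \<open>d > 0\<close> by (auto simp: K_def \<eta>_def)
  have "K * \<eta> \<le> 1/2" using \<open>K > 0\<close> by (simp add: \<eta>_def min_def field_simps)
  have sub: "{T..R} \<subseteq> {0..L}" using T by (auto simp: R_def)
  have "\<forall>s\<in>{T..R}. W s = V s"
  proof (rule lipschitz_ode_unique_on_short_interval)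
    show "T \<le> R" using T \<open>\<eta> > 0\<close> by (simp add: R_def)
    show "0 \<le> K" using \<open>K > 0\<close> by simp
    have "K * (R - T) \<le> K * \<eta>" using \<open>K > 0\<close> by (intro mult_left_mono) (auto simp: R_def)
    then show "K * (R - T) < 1" using \<open>K * \<eta> \<le> 1/2\<close> by simp
    show "(V has_real_derivative V1 x) (at x within {T..R})"
      "(W has_real_derivative W1 x) (at x within {T..R})" if "x \<in> {T..R}" for x
      using has_field_derivative_subset[OF dV sub] has_field_derivative_subset[OF dW sub] that sub
      by auto
    show "\<bar>W1 x - V1 x\<bar> \<le> K * \<bar>W x - V x\<bar>" if x: "x \<in> {T<..<R}" for x
    proof -
      have "x \<in> {0<..L}" "x \<in> {0..L}" "x \<noteq> T" "dist x T < d"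
        using x T \<open>\<eta> < d\<close> by (auto simp: R_def dist_real_def)
      with near have D: "0 < slope_denom a x (V x)" "0 < slope_denom a x (W x)" and "\<bar>q x\<bar> < K"
        by auto
      have "V1 x = slope a x (V x)" "W1 x = slope a x (W x)"
        using eV[OF \<open>x \<in> {0<..L}\<close>] eW[OF \<open>x \<in> {0<..L}\<close>] D by (simp_all add: slope_def field_simps)
      then have "\<bar>W1 x - V1 x\<bar> = \<bar>q x\<bar> * \<bar>W x - V x\<bar>"
        using slope_diff[of a x "W x" "V x"] D by (simp add: q_def abs_mult)
      also have "\<dots> \<le> K * \<bar>W x - V x\<bar>"
        using \<open>\<bar>q x\<bar> < K\<close> by (simp add: mult_right_mono)
      finally show ?thesis .
    qed
  qed fact
  then show ?thesis
    using \<open>\<eta> > 0\<close> by (intro exI[of _ \<eta>]) (auto simp: R_def)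
qed

lemma slope_ode_unique:
  fixes V W V1 W1 :: "real \<Rightarrow> real"
  assumes dV: "\<And>s. s \<in> {0..L} \<Longrightarrow> (V has_real_derivative V1 s) (at s within {0..L})"
    and dW: "\<And>s. s \<in> {0..L} \<Longrightarrow> (W has_real_derivative W1 s) (at s within {0..L})"
    and eV: "\<And>s. s \<in> {0<..L} \<Longrightarrow> V1 s * slope_denom a s (V s) = a * s * V s * (2 - V s)"
    and eW: "\<And>s. s \<in> {0<..L} \<Longrightarrow> W1 s * slope_denom a s (W s) = a * s * W s * (2 - W s)"
    and W0: "W 0 = V 0" and D: "\<And>s. s \<in> {0..L} \<Longrightarrow> slope_denom a s (V s) > 0"
  shows "\<forall>s\<in>{0..L}. W s = V s"
proof (rule agree_on_interval_by_continuation)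
  show "continuous_on {0..L} V" "continuous_on {0..L} W"
    using DERIV_continuous_on[OF dV] DERIV_continuous_on[OF dW] by auto
  show "\<exists>\<eta>>0. \<forall>s\<in>{0..L}. T \<le> s \<and> s \<le> T + \<eta> \<longrightarrow> W s = V s"
    if "T \<in> {0..L}" "W T = V T" for T
    using slope_ode_solutions_agree_right[OF dV dW eV eW that D[OF that(1)]] .
qed (rule W0)

lemma is_sol_unique:
  assumes V: "is_sol N m L V V1 V2" and W: "is_sol N m L W W1 W2"
    and D: "\<And>s. s \<in> {0..L} \<Longrightarrow> slope_denom (real N - 2) s (V s) > 0"
  shows "\<forall>s\<in>{0..L}. W s = V s"
  using V W by (intro slope_ode_unique[OF _ _ _ _ _ D])
    (auto simp: is_sol_def C2_on_def opL_eq_slope_denom)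

section \<open>Existence and the bound on \<open>V\<^sub>s\<^sub>s\<close>\<close>

lemma s_squared_ode_local_solution:
  fixes a m :: real
  assumes "a \<noteq> 0" and m: "m * (2 - m) \<noteq> 0"
  obtains \<rho> g where "\<rho> > 0" "g 0 = m" "\<And>y. \<bar>y\<bar> < \<rho> \<Longrightarrow>
      1 + (6 - 2 * a - 2 * g y) * y \<noteq> 0 \<and>
      (g has_real_derivative a * g y * (2 - g y) / (1 + (6 - 2 * a - 2 * g y) * y)) (at y)"
proof -
  define r where "r = min \<bar>m\<bar> \<bar>2 - m\<bar> / 2"
  have "r > 0" "r < \<bar>m\<bar>" "r < \<bar>2 - m\<bar>" using m by (auto simp: r_def min_def)
  have away: "a * w * (2 - w) \<noteq> 0" if "w \<in> {m - r..m + r}" for w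
    using that \<open>a \<noteq> 0\<close> \<open>r < \<bar>m\<bar>\<close> \<open>r < \<bar>2 - m\<bar>\<close> by (auto split: abs_split)
  define h where "h w = 1 / (a * w * (2 - w))" for w
  define p where "p w = (6 - 2 * a - 2 * w) * h w" for w
  have h: "continuous_on {m - r..m + r} h"
    unfolding h_def by (intro continuous_intros) (use away in auto)
  then have p: "continuous_on {m - r..m + r} p"
    unfolding p_def by (intro continuous_intros)
  obtain u where "u m = 0"
    and u: "\<And>x. x \<in> {m - r..m + r} \<Longrightarrow> (u has_real_derivative h x + p x * u x) (at x within {m - r..m + r})"
    using linear_ode_solvable[OF p h] by blast
  define u1 where "u1 x = h x + p x * u x" for x
  have "continuous_on {m - r<..<m + r} u1"
    unfolding u1_def
    by (intro continuous_intros continuous_on_subset[OF h] continuous_on_subset[OF p]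
        continuous_on_subset[OF DERIV_continuous_on[OF u]]) auto
  moreover have "(u has_real_derivative u1 x) (at x)" if "x \<in> {m - r<..<m + r}" for x
    using u[of x] that at_within_Icc_at[of "m - r" x "m + r"] by (auto simp: u1_def)
  moreover have "u1 m \<noteq> 0"
    using away[of m] \<open>r > 0\<close> by (simp add: u1_def \<open>u m = 0\<close> h_def)
  ultimately obtain \<rho> g where "\<rho> > 0" "g 0 = m" and g: "\<And>y. \<bar>y\<bar> < \<rho> \<Longrightarrow>
      g y \<in> {m - r<..<m + r} \<and> u (g y) = y \<and> u1 (g y) \<noteq> 0 \<and> (g has_real_derivative inverse (u1 (g y))) (at y)"
    using real_local_inverse_function[of "{m - r<..<m + r}" m u u1] \<open>r > 0\<close> \<open>u m = 0\<close> by auto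
  show thesis
  proof (rule that[of \<rho> g])
    fix y assume "\<bar>y\<bar> < \<rho>"
    with g have "g y \<in> {m - r<..<m + r}" "u (g y) = y" "u1 (g y) \<noteq> 0"
      and dg: "(g has_real_derivative inverse (u1 (g y))) (at y)"
      by auto
    have "a * g y * (2 - g y) \<noteq> 0"
      using away[of "g y"] \<open>g y \<in> {m - r<..<m + r}\<close> by simp
    then have "u1 (g y) = (1 + (6 - 2 * a - 2 * g y) * y) / (a * g y * (2 - g y))"
      unfolding u1_def p_def h_def \<open>u (g y) = y\<close> by (simp add: field_simps)
    then show "1 + (6 - 2 * a - 2 * g y) * y \<noteq> 0 \<and>
        (g has_real_derivative a * g y * (2 - g y) / (1 + (6 - 2 * a - 2 * g y) * y)) (at y)"
      using dg \<open>u1 (g y) \<noteq> 0\<close> by simp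
  qed fact+
qed

lemma slope_ode_local_solution_nonequilibrium:
  fixes a m :: real
  assumes "a \<noteq> 0" and "m * (2 - m) \<noteq> 0"
  obtains V where "V 0 = m"
    "\<forall>\<^sub>F s in nhds 0. (V has_real_derivative slope a s (V s)) (at s) \<and> slope_denom a s (V s) \<noteq> 0"
proof -
  obtain \<rho> g where "\<rho> > 0" "g 0 = m" and g: "\<And>y. \<bar>y\<bar> < \<rho> \<Longrightarrow>
      1 + (6 - 2 * a - 2 * g y) * y \<noteq> 0 \<and>
      (g has_real_derivative a * g y * (2 - g y) / (1 + (6 - 2 * a - 2 * g y) * y)) (at y)"
    using s_squared_ode_local_solution[OF assms] by blast
  define V where "V s = g (s^2)" for s
  have "(V has_real_derivative slope a s (V s)) (at s) \<and> slope_denom a s (V s) \<noteq> 0"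
    if "\<bar>s\<bar> < sqrt \<rho>" for s
  proof -
    have "\<bar>s^2\<bar> < \<rho>" using that real_sqrt_abs real_sqrt_less_iff by (metis abs_power2)
    with g have "1 + (6 - 2 * a - 2 * V s) * s^2 \<noteq> 0"
      and dg: "(g has_real_derivative a * V s * (2 - V s) / (1 + (6 - 2 * a - 2 * V s) * s^2)) (at (s^2))"
      by (auto simp: V_def)
    moreover have "1 + (6 - 2 * a - 2 * V s) * s^2 = 2 * slope_denom a s (V s)"
      by (simp add: slope_denom_def algebra_simps)
    ultimately have D: "slope_denom a s (V s) \<noteq> 0"
      and dg: "(g has_real_derivative a * V s * (2 - V s) / (2 * slope_denom a s (V s))) (at (s^2))"
      by simp_all
    have "((\<lambda>s. s^2) has_real_derivative 2 * s) (at s)"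
      by (auto intro!: derivative_eq_intros)
    from DERIV_chain'[OF this dg]
    have "(V has_real_derivative a * V s * (2 - V s) / (2 * slope_denom a s (V s)) * (2 * s)) (at s)"
      by (simp add: V_def[abs_def])
    moreover have "a * V s * (2 - V s) / (2 * slope_denom a s (V s)) * (2 * s) = slope a s (V s)"
      using D by (simp add: slope_def field_simps)
    ultimately show ?thesis using D by simp
  qed
  then have "\<forall>\<^sub>F s in nhds 0. (V has_real_derivative slope a s (V s)) (at s) \<and> slope_denom a s (V s) \<noteq> 0"
    unfolding eventually_nhds_metric using \<open>\<rho> > 0\<close> by (auto simp: dist_real_def intro!: exI[of _ "sqrt \<rho>"])
  moreover have "V 0 = m" using \<open>g 0 = m\<close> by (simp add: V_def)
  ultimately show thesis using that by blast
qed

lemma slope_ode_local_solution: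
  fixes a m :: real
  assumes "a \<noteq> 0"
  obtains V where "V 0 = m"
    "\<forall>\<^sub>F s in nhds 0. (V has_real_derivative slope a s (V s)) (at s) \<and> slope_denom a s (V s) \<noteq> 0"
proof (cases "m * (2 - m) = 0")
  case True
  have "((\<lambda>s. slope_denom a s m) \<longlongrightarrow> slope_denom a 0 m) (nhds 0)"
    unfolding slope_denom_def by (intro tendsto_intros filterlim_ident)
  then have "\<forall>\<^sub>F s in nhds 0. slope_denom a s m \<noteq> 0"
    by (rule tendsto_imp_eventually_ne) (simp add: slope_denom_def)
  moreover have "slope a s m = 0" for s using True by (simp add: slope_def)
  ultimately show thesis
    using that[of "\<lambda>_. m"] by (auto elim: eventually_mono)
next
  case False
  then show thesis using slope_ode_local_solution_nonequilibrium[OF \<open>a \<noteq> 0\<close>] that by blast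
qed

definition slope_deriv :: "real \<Rightarrow> (real \<Rightarrow> real) \<Rightarrow> real \<Rightarrow> real" where
  "slope_deriv a V s =
     ((a * V s * (2 - V s) + a * s * (2 - 2 * V s) * slope a s (V s)) * slope_denom a s (V s)
      - a * s * V s * (2 - V s) * (2 * (3 - a) * s - slope a s (V s) * s^2 - 2 * V s * s))
     / (slope_denom a s (V s))^2"

lemma slope_along_has_derivative:
  assumes dV: "(V has_real_derivative slope a s (V s)) (at s)" and D: "slope_denom a s (V s) \<noteq> 0"
  shows "((\<lambda>s. slope a s (V s)) has_real_derivative slope_deriv a V s) (at s)"
proof -
  have dN: "((\<lambda>s. a * s * V s * (2 - V s)) has_real_derivative
      a * V s * (2 - V s) + a * s * (2 - 2 * V s) * slope a s (V s)) (at s)"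
    by (rule derivative_eq_intros dV refl)+ (simp add: algebra_simps)
  have dD: "((\<lambda>s. slope_denom a s (V s)) has_real_derivative
      2 * (3 - a) * s - slope a s (V s) * s^2 - 2 * V s * s) (at s)"
    unfolding slope_denom_def by (rule derivative_eq_intros dV refl)+ (simp add: algebra_simps)
  show ?thesis
    using DERIV_divide[OF dN dD D] unfolding slope_deriv_def power2_eq_square
    by (simp add: slope_def[abs_def])
qed

lemma isCont_slope_deriv:
  assumes dV: "(V has_real_derivative slope a s (V s)) (at s)" and D: "slope_denom a s (V s) \<noteq> 0"
  shows "isCont (slope_deriv a V) s"
proof -
  have "isCont V s" using dV by (rule DERIV_isCont)
  moreover have "isCont (\<lambda>s. slope a s (V s)) s"
    using slope_along_has_derivative[OF dV D] by (rule DERIV_isCont)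
  ultimately show ?thesis
    unfolding slope_deriv_def using D by (intro continuous_intros) (auto simp: slope_denom_def)
qed

lemma slope_deriv_at_0: "slope_deriv a V 0 = 2 * a * V 0 * (2 - V 0)"
  by (simp add: slope_deriv_def slope_def slope_denom_def power2_eq_square)

lemma slope_ode_solution_near_0:
  fixes a m :: real
  assumes "a > 0" "m > 0"
  obtains V where "V 0 = m"
    "\<forall>\<^sub>F s in nhds 0. (V has_real_derivative slope a s (V s)) (at s) \<and> slope_denom a s (V s) > 0
        \<and> a * m * (2 - m)^2 \<le> (2 - m) * slope_deriv a V s"
proof -
  obtain V where V0: "V 0 = m" and ode:
    "\<forall>\<^sub>F s in nhds 0. (V has_real_derivative slope a s (V s)) (at s) \<and> slope_denom a s (V s) \<noteq> 0"
    using slope_ode_local_solution[of a m] \<open>a > 0\<close> by auto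
  then have dV0: "(V has_real_derivative slope a 0 (V 0)) (at 0)" and D0: "slope_denom a 0 (V 0) \<noteq> 0"
    using eventually_nhds_x_imp_x[OF ode] by auto
  have "isCont (\<lambda>s. slope_denom a s (V s)) 0"
    unfolding slope_denom_def by (intro continuous_intros DERIV_isCont[OF dV0])
  then have "\<forall>\<^sub>F s in nhds 0. 0 < slope_denom a s (V s)"
    by (rule isCont_eventually_greater) (simp add: slope_denom_def)
  moreover have "\<forall>\<^sub>F s in nhds 0. a * m * (2 - m)^2 \<le> (2 - m) * slope_deriv a V s"
  proof (cases "m = 2")
    case False
    have "(2 - m) * slope_deriv a V 0 = 2 * (a * m * (2 - m)^2)"
      unfolding slope_deriv_at_0 V0 power2_eq_square by algebra
    moreover have "0 < a * m * (2 - m)^2" using \<open>a > 0\<close> \<open>m > 0\<close> False by simp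
    ultimately have "a * m * (2 - m)^2 < (2 - m) * slope_deriv a V 0" by linarith
    moreover have "isCont (\<lambda>s. (2 - m) * slope_deriv a V s) 0"
      by (intro continuous_intros isCont_slope_deriv[OF dV0 D0])
    ultimately have "\<forall>\<^sub>F s in nhds 0. a * m * (2 - m)^2 < (2 - m) * slope_deriv a V s"
      by (intro isCont_eventually_greater)
    then show ?thesis by (rule eventually_mono) simp
  qed simp
  ultimately have "\<forall>\<^sub>F s in nhds 0. (V has_real_derivative slope a s (V s)) (at s) \<and> slope_denom a s (V s) > 0
        \<and> a * m * (2 - m)^2 \<le> (2 - m) * slope_deriv a V s"
    using ode by eventually_elim blast
  with V0 show thesis by (rule that)
qed

lemma is_sol_of_slope_ode:
  assumes "V 0 = m"
    and ode: "\<And>s. s \<in> {0..L} \<Longrightarrow>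
      (V has_real_derivative slope (real N - 2) s (V s)) (at s) \<and> slope_denom (real N - 2) s (V s) \<noteq> 0"
  shows "is_sol N m L V (\<lambda>s. slope (real N - 2) s (V s)) (slope_deriv (real N - 2) V)"
  unfolding is_sol_def C2_on_def
proof (intro conjI ballI)
  fix s assume "s \<in> {0..L}"
  note dV = ode[OF this, THEN conjunct1] and D = ode[OF this, THEN conjunct2]
  show "(V has_real_derivative slope (real N - 2) s (V s)) (at s within {0..L})"
    using dV by (rule has_field_derivative_at_within)
  show "((\<lambda>s. slope (real N - 2) s (V s)) has_real_derivative slope_deriv (real N - 2) V s) (at s within {0..L})"
    using slope_along_has_derivative[OF dV D] by (rule has_field_derivative_at_within)
next
  show "continuous_on {0..L} (slope_deriv (real N - 2) V)"
    using ode by (intro continuous_at_imp_continuous_on ballI isCont_slope_deriv) auto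
next
  fix s assume "s \<in> {0<..L}"
  then have "slope_denom (real N - 2) s (V s) \<noteq> 0" using ode by auto
  then show "opL N V (\<lambda>s. slope (real N - 2) s (V s)) s = 0"
    by (simp add: opL_eq_slope_denom slope_def)
qed fact

theorem lemma3p1:
  fixes N :: nat
  assumes "N \<ge> 3"
  shows "\<forall>m::real. m > 0 \<longrightarrow> (\<exists>L>0. \<exists>V V1 V2.
           is_sol N m L V V1 V2
         \<and> (\<forall>W W1 W2. is_sol N m L W W1 W2 \<longrightarrow> (\<forall>s\<in>{0..L}. W s = V s))
         \<and> V1 0 = 0
         \<and> (\<forall>s\<in>{0..L}. (2 - m) * V2 s \<ge> (real N - 2) * m * (2 - m)^2))"
proof (intro allI impI)
  fix m :: real assume "m > 0"
  define a where "a = real N - 2"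
  have "a > 0" using assms by (simp add: a_def)
  obtain V where V0: "V 0 = m" and near_0:
    "\<forall>\<^sub>F s in nhds 0. (V has_real_derivative slope a s (V s)) (at s) \<and> slope_denom a s (V s) > 0
        \<and> a * m * (2 - m)^2 \<le> (2 - m) * slope_deriv a V s"
    using slope_ode_solution_near_0[OF \<open>a > 0\<close> \<open>m > 0\<close>] by blast
  obtain L where "L > 0" and on_L: "\<And>s. s \<in> {0..L} \<Longrightarrow> (V has_real_derivative slope a s (V s)) (at s)
      \<and> slope_denom a s (V s) > 0 \<and> a * m * (2 - m)^2 \<le> (2 - m) * slope_deriv a V s"
    using eventually_nhds_0_imp_Icc[OF near_0] by blast
  have "(V has_real_derivative slope a s (V s)) (at s) \<and> slope_denom a s (V s) \<noteq> 0"
    if "s \<in> {0..L}" for s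
    using on_L[OF that] by auto
  then have sol: "is_sol N m L V (\<lambda>s. slope a s (V s)) (slope_deriv a V)"
    unfolding a_def by (intro is_sol_of_slope_ode V0)
  moreover have "\<forall>s\<in>{0..L}. W s = V s" if "is_sol N m L W W1 W2" for W W1 W2
    using is_sol_unique[OF sol[unfolded a_def] that] on_L by (simp add: a_def)
  moreover have "slope a 0 (V 0) = 0" by (simp add: slope_def)
  ultimately show "\<exists>L>0. \<exists>V V1 V2. is_sol N m L V V1 V2
         \<and> (\<forall>W W1 W2. is_sol N m L W W1 W2 \<longrightarrow> (\<forall>s\<in>{0..L}. W s = V s))
         \<and> V1 0 = 0 \<and> (\<forall>s\<in>{0..L}. (2 - m) * V2 s \<ge> (real N - 2) * m * (2 - m)^2)"
    using \<open>L > 0\<close> on_L unfolding a_def by blast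
qed

end
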